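(* The VC-density of the edge relation on the class $\mathcal J$ of all Johnson graphs is $2$.
   Context: For $m\ge k$ and a set $X$ with $|X|=m$, the Johnson graph $J(m,k)$ has as vertices the $k$-element subsets of $X$, two vertices adjacent iff their intersection has size $k-1$; $\mathcal J=\{J(m,k)\mid k,m\in\mathbb N, k\le m\}$. For a graph $G$, the edge relation set system is $(V(G),\mathcal S_G)$ with $\mathcal S_G=\{N(v)\mid v\in V(G)\}$ ($N(v)$ the set of neighbours of $v$). Its shatter function is $\pi_G(n)=\max\{|\{S\cap A\mid S\in\mathcal S_G\}| : A\subseteq V(G), |A|=n\}$. For a class $\mathcal C$ of graphs, $\pi_{\mathcal C}(n)=\max\{\pi_G(n)\mid G\in\mathcal C\}$, the VC-dimension of the edge relation on $\mathcal C$ is the supremum over $G\in\mathcal C$ of the largest size of a set $A$ with $\{A\cap S\mid S\in\mathcal S_G\}=\mathcal P(A)$, and the VC-density of the edge relation on $\mathcal C$ is $\inf\{r\in\mathbb R^+ : \pi_{\mathcal C}(n)\in\mathcal O(n^r)\}$ if that VC-dimension is finite, and $\infty$ otherwise. *)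

theory Defs
  imports Complex_Main "HOL-Library.Landau_Symbols" "HOL-Library.Extended_Real"
begin

type_synonym 'a graph = "'a set \<times> ('a \<Rightarrow> 'a \<Rightarrow> bool)"

definition verts :: "'a graph \<Rightarrow> 'a set" where
  "verts G = fst G"

definition adj :: "'a graph \<Rightarrow> 'a \<Rightarrow> 'a \<Rightarrow> bool" where
  "adj G = snd G"

definition nbhd :: "'a graph \<Rightarrow> 'a \<Rightarrow> 'a set" where
  "nbhd G v = {u \<in> verts G. adj G v u}"

definition edge_sets :: "'a graph \<Rightarrow> 'a set set" where
  "edge_sets G = nbhd G ` verts G"

definition traces :: "'a graph \<Rightarrow> 'a set \<Rightarrow> 'a set set" where
  "traces G A = (\<lambda>S. S \<inter> A) ` edge_sets G"

text \<open>Shatter function pi_G(n) (maximum over n-element subsets A of V(G);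
  0 if there is no such subset).\<close>
definition shatter_fn :: "'a graph \<Rightarrow> nat \<Rightarrow> nat" where
  "shatter_fn G n = Sup {card (traces G A) | A. A \<subseteq> verts G \<and> finite A \<and> card A = n}"

definition class_shatter_fn :: "'a graph set \<Rightarrow> nat \<Rightarrow> nat" where
  "class_shatter_fn C n = Sup (( \<lambda>G. shatter_fn G n) ` C)"

definition shattered :: "'a graph \<Rightarrow> 'a set \<Rightarrow> bool" where
  "shattered G A \<longleftrightarrow> traces G A = Pow A"

definition vc_dim_finite :: "'a graph set \<Rightarrow> bool" where
  "vc_dim_finite C \<longleftrightarrow> (\<exists>d::nat. \<forall>G\<in>C. \<forall>A. A \<subseteq> verts G \<and> shattered G A \<longrightarrow> finite A \<and> card A \<le> d)"

definition vc_density :: "'a graph set \<Rightarrow> ereal" where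
  "vc_density C = (if vc_dim_finite C
     then ereal (Inf {r::real. r > 0 \<and> (\<lambda>n. real (class_shatter_fn C n)) \<in> O(\<lambda>n. real n powr r)})
     else \<infinity>)"

text \<open>Johnson graph J(m,k) on the ground set X = {0..<m}.
  Adjacency: |A \<inter> B| = k - 1 (written as |A \<inter> B| + 1 = k to avoid truncated subtraction).\<close>
definition johnson_graph :: "nat \<Rightarrow> nat \<Rightarrow> nat set graph" where
  "johnson_graph m k = ({A. A \<subseteq> {0..<m} \<and> card A = k}, \<lambda>A B. card (A \<inter> B) + 1 = k)"

definition johnson_class :: "nat set graph set" where
  "johnson_class = {johnson_graph m k | m k. k \<le> m}"

end

theory Submission
  imports Defs
begin

(* Upper bound: let A be a family of n vertices of J(m,k) and v a vertex; the trace T = N(v) \<inter> A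
   consists of k-sets meeting v in k-1 points, so any two members of T meet in k-1 or k-2 points.
   If some pair B, B' meets in k-2 points, then v = (B \<inter> B') \<union> {a,b} with a \<in> B - B',
   b \<in> B' - B: four choices per pair. Otherwise T is a clique of J(m,k); for B1 \<noteq> B2 in T
   it consists of the members of A containing B1 \<inter> B2 (if B1 \<inter> B2 \<subseteq> v) or of those
   contained in B1 \<union> B2 (otherwise), except v itself. Either way T is fixed by a pair of
   members of A, so there are at most 8 n^2 + n + 1 traces; as 2^n eventually exceeds this,
   the VC-dimension is finite as well.
   Lower bound: in J(n+2,2) the n edges {0,i}, 1 \<le> i \<le> n, are cut by the vertices
   {i,j} \<subseteq> {1..n} in n choose 2 different ways. *)

section \<open>Traces of a vertex on a family of k-sets\<close>

definition johnson_trace :: "nat \<Rightarrow> 'a set set \<Rightarrow> 'a set \<Rightarrow> 'a set set" where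
  "johnson_trace k A v = {B \<in> A. card (v \<inter> B) + 1 = k}"

(* A vertex v \<in> A must be removed from its own clique trace; B' then plays the role of v. *)
definition pair_traces :: "nat \<Rightarrow> 'a set set \<Rightarrow> 'a set \<Rightarrow> 'a set \<Rightarrow> 'a set set set" where
  "pair_traces k A B B' =
     (if card (B \<inter> B') + 2 = k
      then (\<lambda>(a, b). johnson_trace k A (B \<inter> B' \<union> {a, b})) ` ((B - B') \<times> (B' - B)) else {}) \<union>
     {{X \<in> A. B \<inter> B' \<subseteq> X}, {X \<in> A. B \<inter> B' \<subseteq> X} - {B'},
      {X \<in> A. X \<subseteq> B \<union> B'}, {X \<in> A. X \<subseteq> B \<union> B'} - {B'}}"

definition trace_candidates :: "nat \<Rightarrow> 'a set set \<Rightarrow> 'a set set set" where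
  "trace_candidates k A = insert {} ((\<lambda>B. {B}) ` A \<union> (\<Union>(B, B') \<in> A \<times> A. pair_traces k A B B'))"

lemma finite_pair_traces: "finite B \<Longrightarrow> finite B' \<Longrightarrow> finite (pair_traces k A B B')"
  by (simp add: pair_traces_def)

lemma card_pair_traces_le:
  assumes "finite B" "card B = k" "finite B'" "card B' = k"
  shows "card (pair_traces k A B B') \<le> 8"
proof -
  let ?far = "if card (B \<inter> B') + 2 = k
    then (\<lambda>(a, b). johnson_trace k A (B \<inter> B' \<union> {a, b})) ` ((B - B') \<times> (B' - B)) else {}"
  let ?clique = "{{X \<in> A. B \<inter> B' \<subseteq> X}, {X \<in> A. B \<inter> B' \<subseteq> X} - {B'},
    {X \<in> A. X \<subseteq> B \<union> B'}, {X \<in> A. X \<subseteq> B \<union> B'} - {B'}}"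
  have "card ?far \<le> 4"
  proof (cases "card (B \<inter> B') + 2 = k")
    case True
    then have "card (B - B') = 2" "card (B' - B) = 2"
      using assms by (simp_all add: card_Diff_subset_Int Int_commute)
    then show ?thesis
      using True card_image_le[of "(B - B') \<times> (B' - B)"] assms by (simp add: card_cartesian_product)
  qed simp
  moreover have "card ?clique \<le> 4" by (intro card_insert_le_m1) auto
  moreover have "card (pair_traces k A B B') \<le> card ?far + card ?clique"
    unfolding pair_traces_def by (rule card_Un_le)
  ultimately show ?thesis by linarith
qed

lemma card_Int_less_if_neq:
  assumes "finite X" "finite Y" "card X = k" "card Y = k" "X \<noteq> Y"
  shows "card (X \<inter> Y) < k"
proof (rule ccontr)
  assume "\<not> card (X \<inter> Y) < k"
  then have "card (X \<inter> Y) = card X" "card (X \<inter> Y) = card Y"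
    using card_mono[OF assms(1), of "X \<inter> Y"] assms(3,4) by auto
  then have "X \<inter> Y = X" "X \<inter> Y = Y"
    using assms(1,2) by (metis Int_lower1 Int_lower2 card_subset_eq)+
  then show False using assms(5) by simp
qed

lemma Diff_singleton_subset_if_card_Int:
  assumes "finite Y" "card (Y \<inter> X) + 1 = card Y" "c \<in> Y" "c \<notin> X"
  shows "Y - {c} \<subseteq> X"
proof -
  have "card (Y \<inter> X) = card (Y - {c})" using assms by (simp add: card_Diff_singleton)
  moreover have "Y \<inter> X \<subseteq> Y - {c}" using assms(4) by auto
  ultimately have "Y \<inter> X = Y - {c}" using assms(1) by (intro card_subset_eq) auto
  then show ?thesis by auto
qed

lemma common_neighbours_card_Int_ge:
  assumes "finite v" "card v = k" "card (v \<inter> B) + 1 = k" "card (v \<inter> B') + 1 = k"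
  shows "k \<le> card (v \<inter> (B \<inter> B')) + 2"
proof -
  have "card (v \<inter> B) + card (v \<inter> B') = card ((v \<inter> B) \<union> (v \<inter> B')) + card (v \<inter> (B \<inter> B'))"
    using assms(1) by (subst card_Un_Int) (auto simp: Int_ac)
  moreover have "card ((v \<inter> B) \<union> (v \<inter> B')) \<le> k"
    using assms(1,2) by (metis card_mono Int_Un_distrib Int_lower1)
  ultimately show ?thesis using assms(3,4) by linarith
qed

lemma card_Int_common_neighbours:
  assumes "finite v" "card v = k" "finite B" "card B = k" "finite B'" "card B' = k" "B \<noteq> B'"
    and "card (v \<inter> B) + 1 = k" "card (v \<inter> B') + 1 = k"
  shows "card (B \<inter> B') + 1 = k \<or> card (B \<inter> B') + 2 = k"
proof -
  have "card (v \<inter> (B \<inter> B')) \<le> card (B \<inter> B')"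
    using assms(3) by (intro card_mono) auto
  then have "k \<le> card (B \<inter> B') + 2"
    using common_neighbours_card_Int_ge[OF assms(1,2,8,9)] by linarith
  moreover have "card (B \<inter> B') < k" using card_Int_less_if_neq assms(3-7) by blast
  ultimately show ?thesis by linarith
qed

lemma far_common_neighbours_determine_vertex:
  assumes "finite v" "card v = k" "finite B" "card B = k" "finite B'" "card B' = k"
    and "card (v \<inter> B) + 1 = k" "card (v \<inter> B') + 1 = k" "card (B \<inter> B') + 2 = k"
  obtains a b where "a \<in> B - B'" "b \<in> B' - B" "v = (B \<inter> B') \<union> {a, b}"
proof -
  let ?I = "B \<inter> B'"
  have "card (v \<inter> ?I) \<le> card ?I" using assms(3) by (intro card_mono) auto
  then have "card (v \<inter> ?I) = card ?I"
    using common_neighbours_card_Int_ge[OF assms(1,2,7,8)] assms(9) by linarith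
  then have I_sub: "?I \<subseteq> v" using assms(3) by (metis Int_lower2 card_subset_eq finite_Int inf.absorb_iff2)
  have "card ((v \<inter> B) - ?I) = 1"
    using I_sub assms(1,3,7,9) by (subst card_Diff_subset) auto
  then obtain a where a: "(v \<inter> B) - ?I = {a}" by (auto simp: card_Suc_eq)
  have "card ((v \<inter> B') - ?I) = 1"
    using I_sub assms(1,3,8,9) by (subst card_Diff_subset) auto
  then obtain b where b: "(v \<inter> B') - ?I = {b}" by (auto simp: card_Suc_eq)
  have "?I \<union> {a, b} \<subseteq> v" using I_sub a b by auto
  moreover have "card (?I \<union> {a, b}) = card v" using a b assms(2,3,9) by (auto simp: card_insert_if)
  ultimately have "?I \<union> {a, b} = v" using assms(1) by (intro card_subset_eq)
  then show ?thesis using that a b by blast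
qed

locale uniform_family =
  fixes k :: nat and A :: "'a set set"
  assumes family: "B \<in> A \<Longrightarrow> finite B \<and> card B = k"
begin

lemma johnson_trace_memberD:
  assumes "X \<in> johnson_trace k A v"
  shows "X \<in> A" "finite X" "card X = k" "card (X \<inter> v) + 1 = k"
  using assms family by (auto simp: johnson_trace_def Int_commute)

lemma finite_trace_candidates: "finite A \<Longrightarrow> finite (trace_candidates k A)"
  by (auto simp: trace_candidates_def intro!: finite_pair_traces dest: family)

lemma card_trace_candidates_le:
  assumes "finite A"
  shows "card (trace_candidates k A) \<le> 8 * card A ^ 2 + card A + 1"
proof -
  let ?P = "\<Union>(B, B') \<in> A \<times> A. pair_traces k A B B'"
  have "card ?P \<le> (\<Sum>(B, B') \<in> A \<times> A. card (pair_traces k A B B'))"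
    using assms(1) by (simp add: card_UN_le case_prod_unfold)
  also have "\<dots> \<le> (\<Sum>(B, B') \<in> A \<times> A. 8)"
    by (intro sum_mono) (clarsimp, metis family card_pair_traces_le)
  also have "\<dots> = 8 * card A ^ 2" by (simp add: card_cartesian_product power2_eq_square)
  finally have "card ?P \<le> 8 * card A ^ 2" .
  moreover have "card ((\<lambda>B. {B}) ` A) \<le> card A" using assms(1) by (rule card_image_le)
  moreover have "card (trace_candidates k A) \<le> card ((\<lambda>B. {B}) ` A \<union> ?P) + 1"
    unfolding trace_candidates_def by (simp add: card_insert_le_m1)
  ultimately show ?thesis using card_Un_le[of "(\<lambda>B. {B}) ` A" ?P] by linarith
qed

lemma johnson_trace_cases:
  assumes vertex: "finite v" "card v = k"
  obtains (small) "johnson_trace k A v = {} \<or> (\<exists>B. johnson_trace k A v = {B})"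
  | (far) B B' where "B \<in> johnson_trace k A v" "B' \<in> johnson_trace k A v" "card (B \<inter> B') + 2 = k"
  | (clique) B1 B2 where "B1 \<in> johnson_trace k A v" "B2 \<in> johnson_trace k A v" "B1 \<noteq> B2"
      "\<And>X Y. \<lbrakk>X \<in> johnson_trace k A v; Y \<in> johnson_trace k A v; X \<noteq> Y\<rbrakk>
        \<Longrightarrow> card (X \<inter> Y) + 1 = k"
proof -
  let ?T = "johnson_trace k A v"

  have dichotomy: "card (X \<inter> Y) + 1 = k \<or> card (X \<inter> Y) + 2 = k"
    if "X \<in> ?T" "Y \<in> ?T" "X \<noteq> Y" for X Y
    using card_Int_common_neighbours[OF vertex] johnson_trace_memberD[OF that(1)]
      johnson_trace_memberD[OF that(2)] that(3)
    by (simp add: Int_commute)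
  show ?thesis
  proof (cases "\<exists>B B'. B \<in> ?T \<and> B' \<in> ?T \<and> card (B \<inter> B') + 2 = k")
    case True
    then show ?thesis using far by blast
  next
    case False
    then have adjacent: "card (X \<inter> Y) + 1 = k" if "X \<in> ?T" "Y \<in> ?T" "X \<noteq> Y" for X Y
      using dichotomy[OF that] that by blast
    show ?thesis
    proof (cases "\<exists>B1 B2. B1 \<in> ?T \<and> B2 \<in> ?T \<and> B1 \<noteq> B2")
      case True
      then show ?thesis using clique adjacent by blast
    next
      case False
      then have "?T = {} \<or> (\<exists>B. ?T = {B})" by blast
      then show ?thesis using small by blast
    qed
  qed
qed

context
  fixes v B1 B2 :: "'a set"
  assumes vertex: "finite v" "card v = k"
    and B1: "B1 \<in> johnson_trace k A v" and B2: "B2 \<in> johnson_trace k A v" and "B1 \<noteq> B2"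
    and clique: "\<And>X Y. \<lbrakk>X \<in> johnson_trace k A v; Y \<in> johnson_trace k A v; X \<noteq> Y\<rbrakk>
      \<Longrightarrow> card (X \<inter> Y) + 1 = k"
begin

lemma clique_card_Int: "card (B1 \<inter> B2) + 1 = k"
  using clique[OF B1 B2 \<open>B1 \<noteq> B2\<close>] .

lemma clique_card_Un: "card (B1 \<union> B2) = k + 1"
  using card_Un_Int[of B1 B2] clique_card_Int johnson_trace_memberD[OF B1] johnson_trace_memberD[OF B2]
  by simp

lemma clique_Diff_singleton_subset:
  assumes "X \<in> johnson_trace k A v" "X \<noteq> Y" "Y \<in> johnson_trace k A v" "c \<in> X" "c \<notin> Y"
  shows "X - {c} \<subseteq> Y"
  using assms clique[OF assms(1,3,2)] johnson_trace_memberD[OF assms(1)]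
  by (intro Diff_singleton_subset_if_card_Int) auto

lemma clique_star_Int_vertex:
  assumes "X \<in> johnson_trace k A v" "B1 \<inter> B2 \<subseteq> X" "B1 \<inter> B2 \<subseteq> v"
  shows "v \<inter> X = B1 \<inter> B2"
proof -
  have "card (B1 \<inter> B2) = card (v \<inter> X)"
    using johnson_trace_memberD(4)[OF assms(1)] clique_card_Int by (simp add: Int_commute)
  moreover have "B1 \<inter> B2 \<subseteq> v \<inter> X" using assms(2,3) by auto
  ultimately show ?thesis using vertex(1) by (metis card_subset_eq finite_Int)
qed

lemma clique_Int_subset_member:
  assumes C: "B1 \<inter> B2 \<subseteq> v" and X: "X \<in> johnson_trace k A v"
  shows "B1 \<inter> B2 \<subseteq> X"
proof (rule ccontr)
  assume "\<not> B1 \<inter> B2 \<subseteq> X"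
  then obtain c where c: "c \<in> B1 \<inter> B2" "c \<notin> X" by auto
  have "B1 - {c} \<subseteq> X" "B2 - {c} \<subseteq> X"
    using c clique_Diff_singleton_subset[OF B1 _ X] clique_Diff_singleton_subset[OF B2 _ X] by auto
  then have "B1 \<union> B2 - {c} \<subseteq> X" by auto
  moreover have "card (B1 \<union> B2 - {c}) = k"
    using c clique_card_Un johnson_trace_memberD[OF B1] by (simp add: card_Diff_singleton)
  ultimately have X_eq: "X = B1 \<union> B2 - {c}"
    using johnson_trace_memberD[OF X] by (metis card_subset_eq)
  have "v - {c} \<subseteq> X"
    using johnson_trace_memberD[OF X] c C vertex
    by (intro Diff_singleton_subset_if_card_Int) (auto simp: Int_commute)
  then have "v \<subseteq> B1 \<union> B2" using c X_eq by auto
  moreover have "v \<inter> B1 = B1 \<inter> B2" "v \<inter> B2 = B1 \<inter> B2"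
    using clique_star_Int_vertex[OF B1 _ C] clique_star_Int_vertex[OF B2 _ C] by auto
  ultimately have "v = B1 \<inter> B2" by blast
  then show False using clique_card_Int vertex by simp
qed

lemma johnson_trace_clique_star:
  assumes C: "B1 \<inter> B2 \<subseteq> v"
  shows "johnson_trace k A v = {X \<in> A. B1 \<inter> B2 \<subseteq> X} - {v}"
proof (intro equalityI subsetI)
  fix X assume X: "X \<in> johnson_trace k A v"
  then have "X \<noteq> v" using johnson_trace_memberD[OF X] vertex by auto
  then show "X \<in> {X \<in> A. B1 \<inter> B2 \<subseteq> X} - {v}"
    using clique_Int_subset_member[OF C X] johnson_trace_memberD[OF X] by auto
next
  fix X assume X: "X \<in> {X \<in> A. B1 \<inter> B2 \<subseteq> X} - {v}"
  then have "card (v \<inter> X) < k" using family vertex card_Int_less_if_neq by blast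
  moreover have "card (B1 \<inter> B2) \<le> card (v \<inter> X)" using X C vertex by (intro card_mono) auto
  ultimately show "X \<in> johnson_trace k A v" using X clique_card_Int by (auto simp: johnson_trace_def)
qed

lemma clique_vertex_eq_Un_Diff:
  assumes c: "c \<in> B1 \<inter> B2" "c \<notin> v"
  shows "v = B1 \<union> B2 - {c}"
proof -
  have "Bi - {c} \<subseteq> v" if "Bi \<in> johnson_trace k A v" "c \<in> Bi" for Bi
    using c that johnson_trace_memberD[OF that(1)] by (intro Diff_singleton_subset_if_card_Int) auto
  then have "B1 - {c} \<subseteq> v" "B2 - {c} \<subseteq> v" using B1 B2 c by blast+
  then have "B1 \<union> B2 - {c} \<subseteq> v" by auto
  moreover have "card (B1 \<union> B2 - {c}) = card v"
    using c clique_card_Un vertex johnson_trace_memberD[OF B1] by (simp add: card_Diff_singleton)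
  ultimately show ?thesis using vertex(1) by (metis card_subset_eq)
qed

lemma clique_member_subset_Un:
  assumes c: "c \<in> B1 \<inter> B2" "c \<notin> v" and X: "X \<in> johnson_trace k A v"
  shows "X \<subseteq> B1 \<union> B2"
proof (rule ccontr)
  assume "\<not> X \<subseteq> B1 \<union> B2"
  then obtain z where z: "z \<in> X" "z \<notin> B1 \<union> B2" by auto
  have "X - {z} \<subseteq> B1" "X - {z} \<subseteq> B2"
    using z clique_Diff_singleton_subset[OF X _ B1] clique_Diff_singleton_subset[OF X _ B2] by auto
  moreover have "X - {z} \<subseteq> v"
    using johnson_trace_memberD[OF X] z clique_vertex_eq_Un_Diff[OF c]
    by (intro Diff_singleton_subset_if_card_Int) blast+
  ultimately have "X - {z} \<subseteq> B1 \<inter> B2 - {c}" using c by auto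
  then have "card (X - {z}) \<le> card (B1 \<inter> B2 - {c})"
    using johnson_trace_memberD[OF B1] by (intro card_mono) auto
  moreover have "card (X - {z}) + 1 = k" using johnson_trace_memberD[OF X] z by (simp add: card_Diff_singleton)
  moreover have "card (B1 \<inter> B2 - {c}) + 2 = k"
    using c clique_card_Int johnson_trace_memberD[OF B1] card_gt_0_iff[of "B1 \<inter> B2"]
    by (auto simp: card_Diff_singleton)
  ultimately show False by linarith
qed

lemma johnson_trace_clique_top:
  assumes c: "c \<in> B1 \<inter> B2" "c \<notin> v"
  shows "johnson_trace k A v = {X \<in> A. X \<subseteq> B1 \<union> B2} - {v}"
proof (intro equalityI subsetI)
  fix X assume X: "X \<in> johnson_trace k A v"
  then have "X \<noteq> v" using johnson_trace_memberD[OF X] vertex by auto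
  then show "X \<in> {X \<in> A. X \<subseteq> B1 \<union> B2} - {v}"
    using clique_member_subset_Un[OF c X] johnson_trace_memberD[OF X] by auto
next
  fix X assume X: "X \<in> {X \<in> A. X \<subseteq> B1 \<union> B2} - {v}"
  then have "card (v \<inter> X) < k" using family vertex card_Int_less_if_neq by blast
  moreover have "card v + card X = card (v \<union> X) + card (v \<inter> X)"
    using X family vertex by (intro card_Un_Int) auto
  moreover have "card (v \<union> X) \<le> card (B1 \<union> B2)"
    using X clique_vertex_eq_Un_Diff[OF c] johnson_trace_memberD[OF B1] johnson_trace_memberD[OF B2]
    by (intro card_mono) auto
  moreover have "card X = k" using X family by blast
  ultimately have "card (v \<inter> X) + 1 = k" using vertex(2) clique_card_Un by linarith
  then show "X \<in> johnson_trace k A v" using X by (simp add: johnson_trace_def)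
qed

lemma johnson_trace_clique_in_pair_traces:
  obtains B B' where "B \<in> A" "B' \<in> A" "johnson_trace k A v \<in> pair_traces k A B B'"
proof (cases "B1 \<inter> B2 \<subseteq> v")
  case star: True
  note T = johnson_trace_clique_star[OF star]
  show ?thesis
  proof (cases "v \<in> A")
    case True
    have "B1 \<inter> v = B1 \<inter> B2"
      using clique_star_Int_vertex[OF B1 _ star] by (auto simp: Int_commute)
    then show ?thesis
      using that[of B1 v] T True johnson_trace_memberD(1)[OF B1] by (simp add: pair_traces_def)
  next
    case False
    then show ?thesis
      using that[of B1 B2] T johnson_trace_memberD(1)[OF B1] johnson_trace_memberD(1)[OF B2]
      by (simp add: pair_traces_def)
  qed
next
  case False
  then obtain c where c: "c \<in> B1 \<inter> B2" "c \<notin> v" by auto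
  note T = johnson_trace_clique_top[OF c]
  show ?thesis
  proof (cases "v \<in> A")
    case True
    have "B1 \<union> v = B1 \<union> B2" using c clique_vertex_eq_Un_Diff[OF c] by auto
    then show ?thesis
      using that[of B1 v] T True johnson_trace_memberD(1)[OF B1] by (simp add: pair_traces_def)
  next
    case False
    then show ?thesis
      using that[of B1 B2] T johnson_trace_memberD(1)[OF B1] johnson_trace_memberD(1)[OF B2]
      by (simp add: pair_traces_def)
  qed
qed

end

lemma johnson_trace_in_candidates:
  assumes vertex: "finite v" "card v = k"
  shows "johnson_trace k A v \<in> trace_candidates k A"
proof -
  have pair: "pair_traces k A B B' \<subseteq> trace_candidates k A" if "B \<in> A" "B' \<in> A" for B B'
    using that unfolding trace_candidates_def by blast
  from vertex show ?thesis
  proof (cases rule: johnson_trace_cases)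
    case small
    then show ?thesis using johnson_trace_memberD(1)[of _ v] by (auto simp: trace_candidates_def)
  next
    case (far B B')
    have "card (v \<inter> B) + 1 = k" "card (v \<inter> B') + 1 = k"
      using johnson_trace_memberD(4)[OF far(1)] johnson_trace_memberD(4)[OF far(2)]
      by (simp_all add: Int_commute)
    then obtain a b where ab: "(a, b) \<in> (B - B') \<times> (B' - B)" and v_eq: "v = B \<inter> B' \<union> {a, b}"
      using far_common_neighbours_determine_vertex[OF vertex johnson_trace_memberD(2,3)[OF far(1)]
          johnson_trace_memberD(2,3)[OF far(2)] _ _ far(3)]
      by blast
    have "johnson_trace k A v
        \<in> (\<lambda>(a, b). johnson_trace k A (B \<inter> B' \<union> {a, b})) ` ((B - B') \<times> (B' - B))"
      using v_eq by (intro image_eqI[OF _ ab]) simp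
    then have "johnson_trace k A v \<in> pair_traces k A B B'" using far(3) by (simp add: pair_traces_def)
    then show ?thesis using pair johnson_trace_memberD(1)[OF far(1)] johnson_trace_memberD(1)[OF far(2)]
      by blast
  next
    case (clique B1 B2)
    obtain B B' where "B \<in> A" "B' \<in> A" "johnson_trace k A v \<in> pair_traces k A B B'"
      by (rule johnson_trace_clique_in_pair_traces[OF vertex clique])
    then show ?thesis using pair by blast
  qed
qed

end

section \<open>Shatter functions of graphs\<close>

lemma Sup_nat_le: "(\<And>x. x \<in> X \<Longrightarrow> x \<le> (b::nat)) \<Longrightarrow> Sup X \<le> b"
  by (cases "X = {}") (auto intro: cSup_least)

lemma traces_subset_Pow: "traces G A \<subseteq> Pow A"
  by (auto simp: traces_def)

lemma finite_traces: "finite A \<Longrightarrow> finite (traces G A)"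
  by (rule finite_subset[OF traces_subset_Pow]) simp

lemma card_traces_le_power: "finite A \<Longrightarrow> card (traces G A) \<le> 2 ^ card A"
  using card_mono[OF _ traces_subset_Pow, of A G] by (simp add: card_Pow)

lemma shatter_fn_le:
  "(\<And>A. A \<subseteq> verts G \<Longrightarrow> finite A \<Longrightarrow> card A = n \<Longrightarrow> card (traces G A) \<le> b) \<Longrightarrow> shatter_fn G n \<le> b"
  unfolding shatter_fn_def by (rule Sup_nat_le) blast

lemma shatter_fn_le_power: "shatter_fn (G :: 'a graph) n \<le> 2 ^ n"
proof (rule shatter_fn_le)
  fix A :: "'a set" assume "finite A" "card A = n"
  then show "card (traces G A) \<le> 2 ^ n" using card_traces_le_power[of A G] by simp
qed

lemma card_traces_le_shatter_fn:
  assumes "A \<subseteq> verts G" "finite A"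
  shows "card (traces G A) \<le> shatter_fn G (card A)"
  unfolding shatter_fn_def
proof (rule cSup_upper)
  show "bdd_above {card (traces G B) |B. B \<subseteq> verts G \<and> finite B \<and> card B = card A}"
    by (rule bdd_aboveI[of _ "2 ^ card A"]) (auto dest: card_traces_le_power)
qed (use assms in blast)

lemma class_shatter_fn_le:
  "(\<And>G. G \<in> C \<Longrightarrow> shatter_fn G n \<le> b) \<Longrightarrow> class_shatter_fn C n \<le> b"
  unfolding class_shatter_fn_def by (rule Sup_nat_le) blast

lemma shatter_fn_le_class_shatter_fn: "G \<in> C \<Longrightarrow> shatter_fn G n \<le> class_shatter_fn C n"
  unfolding class_shatter_fn_def
  by (rule cSup_upper) (auto intro: bdd_aboveI[of _ "2 ^ n"] shatter_fn_le_power)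

section \<open>Johnson graphs\<close>

lemma verts_johnson_graph: "verts (johnson_graph m k) = {X. X \<subseteq> {0..<m} \<and> card X = k}"
  by (simp add: verts_def johnson_graph_def)

lemma traces_johnson_graph:
  assumes "A \<subseteq> verts (johnson_graph m k)"
  shows "traces (johnson_graph m k) A = johnson_trace k A ` verts (johnson_graph m k)"
  unfolding traces_def edge_sets_def image_image
proof (rule image_cong[OF refl])
  fix v
  show "nbhd (johnson_graph m k) v \<inter> A = johnson_trace k A v"
    using assms by (auto simp: nbhd_def johnson_trace_def adj_def johnson_graph_def verts_johnson_graph)
qed

lemma card_traces_johnson_graph_le:
  assumes "A \<subseteq> verts (johnson_graph m k)" "finite A"
  shows "card (traces (johnson_graph m k) A) \<le> 8 * card A ^ 2 + card A + 1"
proof -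
  interpret uniform_family k A
    using assms(1) by unfold_locales (auto simp: verts_johnson_graph intro: finite_subset)
  have "traces (johnson_graph m k) A \<subseteq> trace_candidates k A"
    using johnson_trace_in_candidates
    by (auto simp: traces_johnson_graph[OF assms(1)] verts_johnson_graph intro: finite_subset)
  then have "card (traces (johnson_graph m k) A) \<le> card (trace_candidates k A)"
    by (rule card_mono[OF finite_trace_candidates[OF assms(2)]])
  also have "\<dots> \<le> 8 * card A ^ 2 + card A + 1"
    using card_trace_candidates_le[OF assms(2)] .
  finally show ?thesis .
qed

lemma class_shatter_fn_johnson_le: "class_shatter_fn johnson_class n \<le> 8 * n ^ 2 + n + 1"
proof (intro class_shatter_fn_le shatter_fn_le)
  fix G A assume "G \<in> johnson_class" "A \<subseteq> verts G" "finite A" "card A = n"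
  then show "card (traces G A) \<le> 8 * n ^ 2 + n + 1"
    unfolding johnson_class_def using card_traces_johnson_graph_le by blast
qed

lemma johnson_trace_star_edges:
  fixes n :: nat
  assumes "S \<subseteq> {1..n}"
  shows "johnson_trace 2 ((\<lambda>i. {0, i}) ` {1..n}) S = (\<lambda>i. {0, i}) ` S"
proof -
  have "0 \<notin> S" using assms by auto
  then have "S \<inter> {0, i} = (if i \<in> S then {i} else {})" for i by auto
  then show ?thesis using assms by (auto simp: johnson_trace_def split: if_splits)
qed

lemma choose_two_le_class_shatter_fn_johnson: "n choose 2 \<le> class_shatter_fn johnson_class n"
proof -
  let ?G = "johnson_graph (n + 2) 2" and ?edge = "\<lambda>i::nat. {0, i}"
  let ?E = "?edge ` {1..n}" and ?pairs = "{S. S \<subseteq> {1..n} \<and> card S = 2}"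
  have "inj_on ?edge {1..n}" by (auto simp: inj_on_def doubleton_eq_iff)
  then have card_E: "card ?E = n" by (simp add: card_image)
  have E_verts: "?E \<subseteq> verts ?G" by (auto simp: verts_johnson_graph)
  have "inj_on (johnson_trace 2 ?E) ?pairs"
  proof (rule inj_on_inverseI)
    fix S assume "S \<in> ?pairs"
    then have S: "S \<subseteq> {1..n}" by simp
    then have "0 \<notin> S" by auto
    then show "\<Union>(johnson_trace 2 ?E S) - {0} = S"
      unfolding johnson_trace_star_edges[OF S] by auto
  qed
  then have "n choose 2 = card (johnson_trace 2 ?E ` ?pairs)"
    using n_subsets[of "{1..n}" 2] by (simp add: card_image)
  also have "\<dots> \<le> card (traces ?G ?E)"
  proof (rule card_mono)
    show "finite (traces ?G ?E)" by (rule finite_traces) simp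
    have "?pairs \<subseteq> verts ?G" by (auto simp: verts_johnson_graph)
    then show "johnson_trace 2 ?E ` ?pairs \<subseteq> traces ?G ?E"
      unfolding traces_johnson_graph[OF E_verts] by blast
  qed
  also have "\<dots> \<le> shatter_fn ?G n"
    using card_traces_le_shatter_fn[OF E_verts] card_E by simp
  also have "\<dots> \<le> class_shatter_fn johnson_class n"
  proof (rule shatter_fn_le_class_shatter_fn)
    show "?G \<in> johnson_class"
      unfolding johnson_class_def by (intro CollectI exI[of _ "n + 2"] exI[of _ 2]) simp
  qed
  finally show ?thesis .
qed

lemma quadratic_less_power_two: "10 \<le> n \<Longrightarrow> 8 * n ^ 2 + n + 1 < (2::nat) ^ n"
proof (induction n rule: nat_induct_at_least)
  case base
  then show ?case by simp
next
  case (Suc n)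
  have "10 * n \<le> n * n" using Suc.hyps by simp
  moreover have "8 * Suc n ^ 2 + Suc n + 1 = 8 * (n * n) + 17 * n + 10"
    and "2 * (8 * n ^ 2 + n + 1) = 16 * (n * n) + 2 * n + 2"
    by (simp_all add: power2_eq_square algebra_simps)
  ultimately have "8 * Suc n ^ 2 + Suc n + 1 \<le> 2 * (8 * n ^ 2 + n + 1)"
    using Suc.hyps by linarith
  then show ?case using Suc.IH by simp
qed

lemma vc_dim_finite_johnson_class: "vc_dim_finite johnson_class"
  unfolding vc_dim_finite_def
proof (intro exI[of _ 9] ballI allI impI)
  fix G A assume "G \<in> johnson_class" and A: "A \<subseteq> verts G \<and> shattered G A"
  then obtain m k where G: "G = johnson_graph m k" by (auto simp: johnson_class_def)
  have "finite (verts G)"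
    unfolding G verts_johnson_graph by (rule finite_subset[of _ "Pow {0..<m}"]) auto
  then have "finite A" using A finite_subset by blast
  then have "2 ^ card A \<le> 8 * card A ^ 2 + card A + 1"
    using card_traces_johnson_graph_le[of A m k] A G by (simp add: shattered_def card_Pow)
  then have "card A \<le> 9" using quadratic_less_power_two[of "card A"] by linarith
  with \<open>finite A\<close> show "finite A \<and> card A \<le> 9" by simp
qed

lemma square_le_four_choose_two: "2 \<le> n \<Longrightarrow> n * n \<le> 4 * (n choose 2)"
proof (induction n rule: nat_induct_at_least)
  case base
  then show ?case by (simp add: numeral_2_eq_2)
next
  case (Suc n)
  have "Suc n choose 2 = n + (n choose 2)" by (simp add: numeral_2_eq_2)
  then show ?case using Suc by simp
qed

lemma class_shatter_fn_johnson_bigo: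
  "(\<lambda>n. real (class_shatter_fn johnson_class n)) \<in> O(\<lambda>n. real n powr 2)"
proof (rule bigoI[of _ 10], rule eventually_mono[OF eventually_ge_at_top[of 1]])
  fix n :: nat assume "1 \<le> n"
  then have "n \<le> n * n" "1 \<le> n * n" by simp_all
  then have "class_shatter_fn johnson_class n \<le> 10 * n ^ 2"
    using class_shatter_fn_johnson_le[of n] unfolding power2_eq_square by linarith
  then have "real (class_shatter_fn johnson_class n) \<le> 10 * real n ^ 2"
    by (metis of_nat_le_iff of_nat_mult of_nat_power of_nat_numeral)
  then show "norm (real (class_shatter_fn johnson_class n)) \<le> 10 * norm (real n powr 2)"
    by (simp add: powr_realpow)
qed

lemma bigo_class_shatter_fn_johnson:
  "(\<lambda>n. real n powr 2) \<in> O(\<lambda>n. real (class_shatter_fn johnson_class n))"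
proof (rule bigoI[of _ 4], rule eventually_mono[OF eventually_ge_at_top[of 2]])
  fix n :: nat assume "2 \<le> n"
  then have "n * n \<le> 4 * class_shatter_fn johnson_class n"
    using square_le_four_choose_two choose_two_le_class_shatter_fn_johnson[of n]
    by (meson le_trans mult_le_mono2)
  then have "real n * real n \<le> 4 * real (class_shatter_fn johnson_class n)"
    by (metis of_nat_le_iff of_nat_mult of_nat_numeral)
  then show "norm (real n powr 2) \<le> 4 * norm (real (class_shatter_fn johnson_class n))"
    using \<open>2 \<le> n\<close> by (simp add: powr_realpow power2_eq_square)
qed

lemma class_shatter_fn_johnson_bigo_iff:
  "(\<lambda>n. real (class_shatter_fn johnson_class n)) \<in> O(\<lambda>n. real n powr r) \<longleftrightarrow> 2 \<le> r"
proof -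
  have powr_bigo: "(\<lambda>n::nat. real n powr p) \<in> O(\<lambda>n. real n powr q) \<longleftrightarrow> p \<le> q" for p q
    by (rule powr_bigo_iff[OF filterlim_real_sequentially]) simp
  show ?thesis
    using class_shatter_fn_johnson_bigo bigo_class_shatter_fn_johnson powr_bigo[of 2 r]
    by (meson landau_o.big_trans)
qed

theorem mainTheorem10:
  shows "vc_density johnson_class = 2"
proof -
  have "{r. r > 0 \<and> (\<lambda>n. real (class_shatter_fn johnson_class n)) \<in> O(\<lambda>n. real n powr r)} = {2..}"
    using class_shatter_fn_johnson_bigo_iff by auto
  then show ?thesis
    using vc_dim_finite_johnson_class by (simp add: vc_density_def)
qed

end
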